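(* Let $S_1,S_2\subset[n]$ be two disjoint nonempty subsets with $|S_1|=s_1$ and $|S_2|=s_2$, and let $s=s_1+s_2$, where $n/s$ is a positive integer. For $i\in\{1,2\}$, let $S_{i^c}$ denote the other set in $\{S_1,S_2\}$. Consider performing $t_i$ independent trials, each of which samples $n/s$ items uniformly without replacement from $[n]$. Given $\epsilon_i>0$, if $t_i\ge \frac{e^5}{4\pi^2}\log\frac{1}{\epsilon_i}\cdot\frac{s}{s_i}$, then with probability at least $1-\epsilon_i$ there exists a trial (among the $t_i$ performed) whose sampled set contains exactly one item from $S_i$ and no item from $S_{i^c}$.
   Context: $\log$ denotes the natural logarithm. *)

theory Defs
  imports Complex_Main "HOL-Probability.Probability"
begin

definition trial_pmf :: "nat \<Rightarrow> nat \<Rightarrow> nat set pmf" where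
  "trial_pmf n k = pmf_of_set {A. A \<subseteq> {1..n} \<and> card A = k}"

definition trials_pmf :: "nat \<Rightarrow> nat \<Rightarrow> nat \<Rightarrow> (nat \<Rightarrow> nat set) pmf" where
  "trials_pmf t n k = Pi_pmf {..<t} {} (\<lambda>_. trial_pmf n k)"

end

theory Submission
  imports Defs
begin

text \<open>Write \<open>A\<close> for \<open>S\<^sub>i\<close>, \<open>B\<close> for the other set and \<open>n = k s\<close>. A single trial
  succeeds with probability \<open>p = |A| C(n - s, k - 1) / C(n, k)\<close>: pick the element of \<open>A\<close>,
  then \<open>k - 1\<close> elements outside \<open>A \<union> B\<close>. Now \<open>C(n, k) = s C(n - 1, k - 1)\<close>, and each of the
  \<open>s - 1\<close> steps from \<open>C(n - 1, k - 1)\<close> down to \<open>C(n - s, k - 1)\<close> loses at most a factor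
  \<open>1 - 1/s\<close>, so \<open>p \<ge> |A| (1 - 1/s)^(s - 1) / s \<ge> |A| / (e s)\<close>. By independence all \<open>t\<close>
  trials fail with probability \<open>(1 - p)^t \<le> exp (- p t) \<le> \<epsilon>\<close>; the constant
  \<open>e\<^sup>5 / (4 \<pi>\<^sup>2)\<close> exceeds \<open>e\<close> because \<open>4 \<pi>\<^sup>2 \<le> e\<^sup>4\<close>.\<close>

lemma exp_neg_one_le_power:
  assumes "s > 0"
  shows "exp (-1) \<le> (1 - 1 / real s) ^ (s - 1)"
proof (cases "s = 1")
  case False
  define m where "m = s - 1"
  have m: "m > 0" "real s = real m + 1" using assms False by (auto simp: m_def)
  have "(1 + 1 / real m) ^ m \<le> exp 1"
    using exp_ge_one_plus_x_over_n_power_n[of m 1] m by simp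
  moreover have "(1 - 1 / real s) ^ m = inverse ((1 + 1 / real m) ^ m)"
    using m by (simp add: field_simps power_inverse[symmetric])
  moreover have "0 < (1 + 1 / real m) ^ m" by (intro zero_less_power add_pos_nonneg) auto
  ultimately show ?thesis
    unfolding m_def exp_minus by (metis le_imp_inverse_le)
qed simp

lemma four_pi_squared_le_exp_4: "4 * pi\<^sup>2 \<le> exp (4::real)"
proof -
  have "(2.7::real) \<le> exp 1" using e_approx_32 by (simp add: abs_if split: if_splits)
  hence "2.7 ^ 4 \<le> exp (1::real) ^ 4" by (rule power_mono) simp
  also have "\<dots> = exp 4" by (simp flip: exp_of_nat_mult)
  finally have "(2.7::real) ^ 4 \<le> exp 4" .
  moreover have "pi\<^sup>2 \<le> 3.2\<^sup>2" using pi_approx by (intro power_mono) auto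
  moreover have "4 * (3.2::real)\<^sup>2 \<le> 2.7 ^ 4" by (simp add: power2_eq_square power4_eq_xxxx)
  ultimately show ?thesis by linarith
qed

text \<open>From \<open>(M - r) C(M, r) = M C(M - 1, r)\<close> and \<open>r / M \<le> 1 / s\<close>.\<close>

lemma binomial_pred_ge:
  fixes M r s :: nat
  assumes "r * s < M" "s > 0"
  shows "(1 - 1 / real s) * real (M choose r) \<le> real ((M - 1) choose r)"
proof -
  have factor: "(1 - 1 / real s) * real M \<le> real (M - r)"
  proof -
    have "real r * real s + 1 \<le> real M"
      using assms by (metis Suc_leI add.commute of_nat_Suc of_nat_le_iff of_nat_mult)
    moreover have "r \<le> M"
      using assms by (metis le_trans less_imp_le mult_le_mono2 nat_mult_1_right Suc_leI One_nat_def)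
    ultimately show ?thesis using assms by (simp add: field_simps of_nat_diff)
  qed
  have "(1 - 1 / real s) * real (M choose r) * real M \<le> real (M - r) * real (M choose r)"
    using mult_right_mono[OF factor, of "real (M choose r)"] by (simp add: algebra_simps)
  also have "\<dots> = real ((M - 1) choose r) * real M"
    by (metis binomial_absorb_comp mult.commute of_nat_mult)
  finally show ?thesis using assms by (simp add: mult_le_cancel_right)
qed

lemma binomial_diff_ge:
  fixes N r s d :: nat
  assumes "r * s + d \<le> N" "s > 0"
  shows "(1 - 1 / real s) ^ d * real (N choose r) \<le> real ((N - d) choose r)"
  using assms(1)
proof (induction d)
  case (Suc d)
  have "(1 - 1 / real s) ^ Suc d * real (N choose r)
      = (1 - 1 / real s) * ((1 - 1 / real s) ^ d * real (N choose r))" by simp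
  also have "\<dots> \<le> (1 - 1 / real s) * real ((N - d) choose r)"
    using Suc assms(2) by (intro mult_left_mono) auto
  also have "\<dots> \<le> real ((N - Suc d) choose r)"
    using binomial_pred_ge[of r s "N - d"] Suc.prems assms(2) by simp
  finally show ?case .
qed simp

lemma binomial_ratio_ge:
  fixes k s :: nat
  assumes "k > 0" "s > 0"
  shows "real ((k * s) choose k) \<le> exp 1 * real s * real ((k * s - s) choose (k - 1))"
proof -
  define N where "N = k * s - 1"
  have "real k * real ((k * s) choose k) = real (k * s) * real (N choose (k - 1))"
    using times_binomial_minus1_eq[of k "k * s"] assms(1) unfolding N_def by (metis of_nat_mult)
  hence "real ((k * s) choose k) = exp 1 * real s * (exp (-1) * real (N choose (k - 1)))"
    using assms(1) by (simp add: exp_minus field_simps)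
  also have "\<dots> \<le> exp 1 * real s * ((1 - 1 / real s) ^ (s - 1) * real (N choose (k - 1)))"
    using exp_neg_one_le_power[OF assms(2)] by (intro mult_left_mono mult_right_mono) auto
  also have "\<dots> \<le> exp 1 * real s * real ((N - (s - 1)) choose (k - 1))"
  proof (intro mult_left_mono binomial_diff_ge[OF _ assms(2)])
    show "(k - 1) * s + (s - 1) \<le> N"
      using assms unfolding N_def by (cases k) auto
  qed simp
  also have "N - (s - 1) = k * s - s"
    using assms unfolding N_def by (cases k) auto
  finally show ?thesis .
qed

lemma card_subsets_meeting_once_avoiding:
  assumes "finite U" "A \<subseteq> U" "B \<subseteq> U" "A \<inter> B = {}" "k > 0"
  shows "card {X. X \<subseteq> U \<and> card X = k \<and> card (X \<inter> A) = 1 \<and> X \<inter> B = {}}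
         = card A * ((card U - (card A + card B)) choose (k - 1))"
proof -
  define R where "R = U - (A \<union> B)"
  define Ys where "Ys = {Y. Y \<subseteq> R \<and> card Y = k - 1}"
  have finite: "finite A" "finite B" "finite R"
    using assms finite_subset unfolding R_def by auto
  have card_R: "card R = card U - (card A + card B)"
    unfolding R_def using assms finite by (simp add: card_Diff_subset card_Un_disjoint)
  have "{X. X \<subseteq> U \<and> card X = k \<and> card (X \<inter> A) = 1 \<and> X \<inter> B = {}}
        = (\<lambda>(x, Y). insert x Y) ` (A \<times> Ys)"
  proof (intro equalityI subsetI)
    fix X assume X: "X \<in> {X. X \<subseteq> U \<and> card X = k \<and> card (X \<inter> A) = 1 \<and> X \<inter> B = {}}"
    then obtain x where x: "X \<inter> A = {x}" by (auto simp: card_1_singleton_iff)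
    have "finite X" "x \<in> X" using X x assms(1) finite_subset by auto
    hence "X - {x} \<in> Ys" using X x unfolding Ys_def R_def by (auto simp: card_Diff_singleton)
    moreover have "X = insert x (X - {x})" "x \<in> A" using x by auto
    ultimately show "X \<in> (\<lambda>(x, Y). insert x Y) ` (A \<times> Ys)" by blast
  next
    fix X assume "X \<in> (\<lambda>(x, Y). insert x Y) ` (A \<times> Ys)"
    then obtain x Y where X: "X = insert x Y" "x \<in> A" "Y \<subseteq> R" "card Y = k - 1"
      unfolding Ys_def by auto
    have "finite Y" "x \<notin> Y" using X finite(3) finite_subset unfolding R_def by auto
    hence "card X = k" using X assms(5) by simp
    moreover have "X \<subseteq> U" "X \<inter> A = {x}" "X \<inter> B = {}"
      using X assms(2,4) unfolding R_def by auto
    ultimately show "X \<in> {X. X \<subseteq> U \<and> card X = k \<and> card (X \<inter> A) = 1 \<and> X \<inter> B = {}}"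
      by simp
  qed
  moreover have "inj_on (\<lambda>(x, Y). insert x Y) (A \<times> Ys)"
  proof (rule inj_onI, clarify)
    fix x Y x' Y' assume h: "x \<in> A" "Y \<in> Ys" "x' \<in> A" "Y' \<in> Ys" "insert x Y = insert x' Y'"
    have "Y \<inter> A = {}" "Y' \<inter> A = {}" using h(2,4) unfolding Ys_def R_def by auto
    hence "insert x Y \<inter> A = {x}" "insert x' Y' \<inter> A = {x'}" using h by auto
    hence "x = x'" using h(5) by simp
    moreover have "Y = insert x Y - {x}" "Y' = insert x' Y' - {x'}"
      using \<open>Y \<inter> A = {}\<close> \<open>Y' \<inter> A = {}\<close> h by auto
    ultimately show "x = x' \<and> Y = Y'" using h(5) by metis
  qed
  moreover have "card Ys = card R choose (k - 1)"
    unfolding Ys_def using n_subsets[OF finite(3)] by simp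
  ultimately show ?thesis using card_R by (simp add: card_image card_cartesian_product)
qed

lemma prob_trial_meets_once_avoiding:
  assumes "A \<subseteq> {1..n}" "B \<subseteq> {1..n}" "A \<inter> B = {}" "0 < k" "k \<le> n"
  shows "measure_pmf.prob (trial_pmf n k) {X. card (X \<inter> A) = 1 \<and> X \<inter> B = {}}
         = real (card A) * real ((n - (card A + card B)) choose (k - 1)) / real (n choose k)"
proof -
  define U where "U = {X. X \<subseteq> {1..n} \<and> card X = k}"
  have card_U: "card U = n choose k" unfolding U_def by (simp add: n_subsets)
  hence "U \<noteq> {}" "finite U" using assms(5) by (auto intro: card_ge_0_finite)
  hence "measure_pmf.prob (trial_pmf n k) {X. card (X \<inter> A) = 1 \<and> X \<inter> B = {}}
         = real (card (U \<inter> {X. card (X \<inter> A) = 1 \<and> X \<inter> B = {}})) / real (card U)"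
    unfolding trial_pmf_def U_def[symmetric] by (simp add: measure_pmf_of_set)
  also have "U \<inter> {X. card (X \<inter> A) = 1 \<and> X \<inter> B = {}}
      = {X. X \<subseteq> {1..n} \<and> card X = k \<and> card (X \<inter> A) = 1 \<and> X \<inter> B = {}}"
    unfolding U_def by blast
  finally show ?thesis
    using card_subsets_meeting_once_avoiding[of "{1..n}" A B k] assms card_U by simp
qed

lemma prob_Pi_pmf_exists_in:
  "measure_pmf.prob (Pi_pmf {..<t} dflt (\<lambda>_. p)) {T. \<exists>j<t. T j \<in> G}
   = 1 - (1 - measure_pmf.prob p G) ^ t"
proof -
  have "{T. \<exists>j<t. T j \<in> G} = UNIV - Pi {..<t} (\<lambda>_. - G)" by auto
  moreover have "measure_pmf.prob p (- G) = 1 - measure_pmf.prob p G"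
    using measure_pmf.prob_compl[of G p] by (simp add: Compl_eq_Diff_UNIV)
  ultimately show ?thesis
    by (simp add: measure_pmf.prob_compl[simplified] measure_Pi_pmf_Pi)
qed

lemma prob_trial_meets_once_avoiding_ge:
  assumes "A \<subseteq> {1..n}" "B \<subseteq> {1..n}" "A \<inter> B = {}" "A \<noteq> {}"
    and "n = k * (card A + card B)"
  shows "real (card A) / (exp 1 * real (card A + card B))
         \<le> measure_pmf.prob (trial_pmf n k) {X. card (X \<inter> A) = 1 \<and> X \<inter> B = {}}"
proof -
  define s where "s = card A + card B"
  have "finite A" using assms(1) finite_subset by blast
  hence "s > 0" using assms(4) unfolding s_def by (simp add: card_gt_0_iff)
  have "n > 0" using assms(1,4) by auto
  hence "k > 0" using assms(5) by simp
  have "k \<le> n" using assms(5) \<open>s > 0\<close> unfolding s_def[symmetric] by simp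
  hence choose_pos: "0 < real (n choose k)" by simp
  have "real (card A) / (exp 1 * real s)
      = real (card A) * (real (n choose k) / (exp 1 * real s)) / real (n choose k)"
    using choose_pos by simp
  also have "\<dots> \<le> real (card A) * real ((n - s) choose (k - 1)) / real (n choose k)"
    using binomial_ratio_ge[OF \<open>k > 0\<close> \<open>s > 0\<close>] assms(5) choose_pos
    unfolding s_def[symmetric] by (intro divide_right_mono mult_left_mono) (auto simp: field_simps)
  also have "\<dots> = measure_pmf.prob (trial_pmf n k) {X. card (X \<inter> A) = 1 \<and> X \<inter> B = {}}"
    using prob_trial_meets_once_avoiding[OF assms(1-3) \<open>k > 0\<close>] assms(5) \<open>s > 0\<close>
    unfolding s_def by simp
  finally show ?thesis unfolding s_def .
qed

lemma one_minus_power_le: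
  fixes p q c \<epsilon> :: real
  assumes "0 < q" "q \<le> p" "p \<le> 1" "1 \<le> c" "0 < \<epsilon>" "c / q * ln (1 / \<epsilon>) \<le> t"
  shows "(1 - p) ^ t \<le> \<epsilon>"
proof -
  have "ln (1 / \<epsilon>) \<le> p * t"
  proof (cases "ln (1 / \<epsilon>) \<le> 0")
    case True
    moreover have "0 \<le> p * t" using assms(1,2) by simp
    ultimately show ?thesis by linarith
  next
    case False
    have "ln (1 / \<epsilon>) \<le> q * (c / q * ln (1 / \<epsilon>))"
      using assms(1,4) False by simp
    also have "\<dots> \<le> p * t"
      using assms False by (intro mult_mono) auto
    finally show ?thesis .
  qed
  have "(1 - p) ^ t \<le> exp (- p) ^ t"
    using assms(3) exp_ge_add_one_self[of "- p"] by (intro power_mono) auto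
  also have "\<dots> = exp (- (p * t))" by (simp flip: exp_of_nat_mult)
  also have "\<dots> \<le> exp (- ln (1 / \<epsilon>))" using \<open>ln (1 / \<epsilon>) \<le> p * t\<close> by simp
  also have "\<dots> = \<epsilon>" using assms(5) by (simp add: ln_div)
  finally show ?thesis .
qed

theorem lemma1:
  fixes n s1 s2 s i t :: nat and S1 S2 :: "nat set" and \<epsilon> :: real
  assumes "S1 \<subseteq> {1..n}" and "S2 \<subseteq> {1..n}" and "S1 \<inter> S2 = {}"
    and "S1 \<noteq> {}" and "S2 \<noteq> {}"
    and "card S1 = s1" and "card S2 = s2" and "s = s1 + s2"
    and "s dvd n"
    and "i \<in> {1, 2}"
    and "\<epsilon> > 0"
    and "real t \<ge> exp 5 / (4 * pi\<^sup>2) * ln (1 / \<epsilon>) *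
           (real s / real (if i = 1 then s1 else s2))"
  shows "measure_pmf.prob (trials_pmf t n (n div s))
           {T. \<exists>j<t. card (T j \<inter> (if i = 1 then S1 else S2)) = 1
                    \<and> T j \<inter> (if i = 1 then S2 else S1) = {}} \<ge> 1 - \<epsilon>"
proof -
  define A where "A = (if i = 1 then S1 else S2)"
  define B where "B = (if i = 1 then S2 else S1)"
  define G where "G = {X. card (X \<inter> A) = 1 \<and> X \<inter> B = {}}"
  have AB: "A \<subseteq> {1..n}" "B \<subseteq> {1..n}" "A \<inter> B = {}" "A \<noteq> {}" "card A + card B = s"
    and card_A: "card A = (if i = 1 then s1 else s2)"
    using assms unfolding A_def B_def by auto
  have "card A > 0" using AB(1,4) finite_subset by (auto simp: card_gt_0_iff)
  obtain k where n: "n = k * s" using assms(9) by (metis dvd_def mult.commute)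
  define q where "q = real (card A) / (exp 1 * real s)"
  have "0 < q" using \<open>card A > 0\<close> AB(5) unfolding q_def by simp
  moreover have "q \<le> measure_pmf.prob (trial_pmf n k) G"
    using prob_trial_meets_once_avoiding_ge[of A n B k] AB n unfolding q_def G_def by simp
  moreover have "1 \<le> exp 4 / (4 * pi\<^sup>2)" using four_pi_squared_le_exp_4 by simp
  moreover have "exp 4 / (4 * pi\<^sup>2) / q * ln (1 / \<epsilon>) \<le> real t"
    using assms(12) unfolding q_def card_A by (simp add: field_simps flip: exp_add)
  ultimately have "(1 - measure_pmf.prob (trial_pmf n k) G) ^ t \<le> \<epsilon>"
    using assms(11) by (intro one_minus_power_le[where q = q and c = "exp 4 / (4 * pi\<^sup>2)"]) auto
  moreover have "n div s = k" using n \<open>card A > 0\<close> AB(5) by simp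
  ultimately show ?thesis
    using prob_Pi_pmf_exists_in[of t "{}" "trial_pmf n k" G]
    unfolding trials_pmf_def G_def A_def B_def by simp
qed

end
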